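(* Let $f:\mathbb{R}^n\to\mathbb{R}$ be a convex, continuously differentiable function whose gradient is locally $\nu$-Hölder for some $\nu\in(0,1]$, and assume $\mathcal{X}^*:=\arg\min_{x\in\mathbb{R}^n} f(x)\neq\emptyset$ with optimal value $f^*$. Let $x^0\in\mathbb{R}^n$ be such that the level set $\Lambda(x^0):=\{x\in\mathbb{R}^n: f(x)\le f(x^0)\}$ is bounded. Let $r:=\max\{\|x\|: x\in\Lambda(x^0)\}$, $\bar r:=(1+2(1+\nu)^{1/\nu})r$, $\Omega:=\overline{B}(0;\bar r)$, and let $L_\Omega>0$ be a constant with $\|\nabla f(x)-\nabla f(y)\|\le L_\Omega\|x-y\|^\nu$ for all $x,y\in\Omega$. Let $(x^k)_{k\ge0}$ be generated by $$x^{k+1}=x^k-\alpha_k\|\nabla f(x^k)\|^{\frac{1-\nu}{\nu}}\nabla f(x^k),\qquad \alpha_k\in\Big(0,\big(\tfrac{1+\nu}{L_\Omega}\big)^{1/\nu}\Big].$$ Then: (a) $x^k\in\Lambda(x^0)$ for all $k$, and for all $k\in\mathbb{N}_0$, $$f(x^{k+1})\le f(x^k)-\Big(\alpha_k-\tfrac{L_\Omega}{1+\nu}\alpha_k^{1+\nu}\Big)\|\nabla f(x^k)\|^{\frac{1+\nu}{\nu}},$$ and $f(x^{k+1})\le f(x^k)$ for all $k\in\mathbb{N}_0$; (b) if moreover $\alpha_k\in\big(0,\tfrac{4\nu}{(1+\nu)L_\Omega^{1/\nu}}\big]$ for all $k$, then for every $x^*\in\mathcal{X}^*$ and all $k\in\mathbb{N}_0$,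 $$\|x^{k+1}-x^*\|^2\le\|x^k-x^*\|^2-\Big(\tfrac{4\nu\alpha_k}{(1+\nu)L_\Omega^{1/\nu}}-\alpha_k^2\Big)\|\nabla f(x^k)\|^{\frac{2}{\nu}},$$ and $\|x^{k+1}-x^*\|\le\|x^k-x^*\|$ for all $k\in\mathbb{N}_0$; (c) the coefficient $\alpha\mapsto \alpha-\tfrac{L_\Omega}{1+\nu}\alpha^{1+\nu}$ in (a) is maximized over $\big(0,(\tfrac{1+\nu}{L_\Omega})^{1/\nu}\big]$ at $\alpha=1/L_\Omega^{1/\nu}$, and the coefficient $\alpha\mapsto\tfrac{4\nu\alpha}{(1+\nu)L_\Omega^{1/\nu}}-\alpha^2$ in (b) is maximized over $\big(0,\tfrac{4\nu}{(1+\nu)L_\Omega^{1/\nu}}\big]$ at $\alpha=\tfrac{2\nu}{(1+\nu)L_\Omega^{1/\nu}}$.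
   Context: A map $F$ is locally $\nu$-Hölder if every point has a neighbourhood $B(\bar x;\delta)$ and a constant $L>0$ with $\|F(x)-F(y)\|\le L\|x-y\|^\nu$ on it. $\overline{B}(0;\rho)$ denotes the closed Euclidean ball of radius $\rho$ centred at $0$; $\mathbb{N}_0=\{0,1,2,\dots\}$. Since $\nabla f$ is locally $\nu$-Hölder and $\Omega$ is compact, such a constant $L_\Omega$ exists. *)

theory Defs
  imports "HOL-Analysis.Analysis"
begin

definition locally_holder :: "real \<Rightarrow> ('a::real_normed_vector \<Rightarrow> 'b::real_normed_vector) \<Rightarrow> bool" where
  "locally_holder \<nu> F \<longleftrightarrow>
     (\<forall>xb. \<exists>\<delta>>0. \<exists>L>0. \<forall>x\<in>ball xb \<delta>. \<forall>y\<in>ball xb \<delta>.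
        norm (F x - F y) \<le> L * norm (x - y) powr \<nu>)"

definition level_set :: "('a \<Rightarrow> real) \<Rightarrow> 'a \<Rightarrow> 'a set" where
  "level_set f x0 = {x. f x \<le> f x0}"

definition argmin_set :: "('a \<Rightarrow> real) \<Rightarrow> 'a set" where
  "argmin_set f = {x. \<forall>y. f x \<le> f y}"

end

theory Submission
  imports Defs
begin

text \<open>
  On any convex set where the gradient is \<open>\<nu>\<close>-Hoelder with constant \<open>L\<close>, the Hoelder descent
  lemma \<open>f z \<le> f y + \<langle>\<nabla>f y, z - y\<rangle> + L / (1 + \<nu>) * \<parallel>z - y\<parallel> powr (1 + \<nu>)\<close> holds.
  Since the gradient vanishes at a minimiser, which lies in the level set and hence in
  \<open>cball 0 r\<close>, the Hoelder bound gives \<open>\<parallel>\<nabla>f y\<parallel> powr (1 / \<nu>) \<le> L powr (1 / \<nu>) * 2 r\<close>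
  on the level set; so every admissible step has length at most \<open>2 (1 + \<nu>) powr (1 / \<nu>) r\<close>
  and stays in \<open>\<Omega>\<close>, where the descent lemma yields (a) and, inductively, that the iterates
  never leave the level set. For (b), the descent lemma at \<open>x\<^sup>k - u\<close> and at \<open>x\<^sup>* + u\<close>
  combined with the gradient inequality of convexity, for the trial step \<open>u\<close> of step size
  \<open>1 / L powr (1 / \<nu>)\<close>, gives
  \<open>\<langle>\<nabla>f x\<^sup>k, x\<^sup>k - x\<^sup>*\<rangle> \<ge> 2 \<nu> / ((1 + \<nu>) L powr (1 / \<nu>)) * \<parallel>\<nabla>f x\<^sup>k\<parallel> powr ((1 + \<nu>) / \<nu>)\<close>,
  and expanding \<open>\<parallel>x\<^sup>k\<^sup>+\<^sup>1 - x\<^sup>*\<parallel>\<^sup>2\<close> gives (b). Part (c) is Young's inequality and completing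
  the square.
\<close>

definition holder_on :: "real \<Rightarrow> real \<Rightarrow> 'a::real_normed_vector set \<Rightarrow> ('a \<Rightarrow> 'b::real_normed_vector) \<Rightarrow> bool" where
  "holder_on \<nu> L S F \<longleftrightarrow> (\<forall>u\<in>S. \<forall>v\<in>S. norm (F u - F v) \<le> L * norm (u - v) powr \<nu>)"

text \<open>The method steps along \<open>- holder_direction \<nu> (\<nabla>f x)\<close>; this map is the gradient of
  \<open>\<nu> / (1 + \<nu>) * \<parallel>v\<parallel> powr ((1 + \<nu>) / \<nu>)\<close>, the convex conjugate of \<open>\<parallel>u\<parallel> powr (1 + \<nu>) / (1 + \<nu>)\<close>.\<close>

definition holder_direction :: "real \<Rightarrow> 'a::real_normed_vector \<Rightarrow> 'a" where
  "holder_direction \<nu> v = norm v powr ((1 - \<nu>) / \<nu>) *\<^sub>R v"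

lemma holder_gain_nonneg:
  fixes \<nu> L a :: real
  assumes "0 < \<nu>" "0 < L" "0 \<le> a" "a \<le> ((1 + \<nu>) / L) powr (1 / \<nu>)"
  shows "0 \<le> a - L / (1 + \<nu>) * a powr (1 + \<nu>)"
proof -
  have "a powr \<nu> \<le> (((1 + \<nu>) / L) powr (1 / \<nu>)) powr \<nu>"
    using assms by (intro powr_mono2) auto
  also have "\<dots> = (1 + \<nu>) / L"
    using assms by (simp add: powr_powr)
  finally have "L / (1 + \<nu>) * a powr \<nu> \<le> 1"
    using assms by (simp add: field_simps)
  then have "a * (L / (1 + \<nu>) * a powr \<nu>) \<le> a"
    using assms(3) by (rule mult_left_le)
  moreover have "a powr (1 + \<nu>) = a * a powr \<nu>"
    using assms(3) by (simp add: powr_add)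
  ultimately show ?thesis
    by (simp add: mult.left_commute)
qed

lemma holder_gain_le:
  fixes \<nu> L a :: real
  assumes "0 < \<nu>" "0 < L" "0 \<le> a"
  shows "a - L / (1 + \<nu>) * a powr (1 + \<nu>) \<le> \<nu> / ((1 + \<nu>) * L powr (1 / \<nu>))"
proof -
  define b where "b = L powr (- 1 / (1 + \<nu>))"
  have "b > 0"
    using assms by (simp add: b_def)
  have "(a / b) powr (1 + \<nu>) = L * a powr (1 + \<nu>)"
  proof -
    have "a / b = a * L powr (1 / (1 + \<nu>))"
      using assms by (simp add: b_def powr_minus_divide)
    then show ?thesis
      using assms by (simp add: powr_mult powr_powr)
  qed
  moreover have "b powr ((1 + \<nu>) / \<nu>) = 1 / L powr (1 / \<nu>)"
  proof -
    have "1 / (1 + \<nu>) * ((1 + \<nu>) / \<nu>) = 1 / \<nu>"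
      using assms by simp
    then show ?thesis
      using assms by (simp add: b_def powr_minus_divide powr_divide powr_powr)
  qed
  moreover have "(a / b) * b \<le> (a / b) powr (1 + \<nu>) / (1 + \<nu>) + b powr ((1 + \<nu>) / \<nu>) / ((1 + \<nu>) / \<nu>)"
    using assms \<open>b > 0\<close> by (intro Youngs_inequality) (auto simp: field_simps)
  ultimately have "a \<le> L / (1 + \<nu>) * a powr (1 + \<nu>) + \<nu> / ((1 + \<nu>) * L powr (1 / \<nu>))"
    using \<open>b > 0\<close> by (simp add: mult.commute)
  then show ?thesis
    by simp
qed

lemma holder_gain_at_optimum:
  fixes \<nu> L :: real
  assumes "0 < \<nu>" "0 < L"
  shows "1 / L powr (1 / \<nu>) - L / (1 + \<nu>) * (1 / L powr (1 / \<nu>)) powr (1 + \<nu>)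
       = \<nu> / ((1 + \<nu>) * L powr (1 / \<nu>))"
proof -
  have "L * (1 / L powr (1 / \<nu>)) powr (1 + \<nu>) = 1 / L powr (1 / \<nu>)"
    using assms by (simp add: powr_divide powr_powr field_simps powr_add)
  then show ?thesis
    using assms by (simp add: field_simps)
qed

lemma holder_optimal_step_le:
  fixes \<nu> L :: real
  assumes "0 < \<nu>" "0 < L"
  shows "1 / L powr (1 / \<nu>) \<le> ((1 + \<nu>) / L) powr (1 / \<nu>)"
proof -
  have "1 \<le> (1 + \<nu>) powr (1 / \<nu>)"
    using assms by (intro ge_one_powr_ge_zero) auto
  then show ?thesis
    using assms by (simp add: powr_divide divide_right_mono)
qed

lemma is_arg_max_holder_gain:
  fixes \<nu> L :: real
  assumes "0 < \<nu>" "0 < L"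
  shows "is_arg_max (\<lambda>a. a - L / (1 + \<nu>) * a powr (1 + \<nu>))
           (\<lambda>a. a \<in> {0<..((1 + \<nu>) / L) powr (1 / \<nu>)}) (1 / L powr (1 / \<nu>))"
  unfolding is_arg_max_linorder holder_gain_at_optimum[OF assms]
  using assms holder_optimal_step_le[OF assms] holder_gain_le[OF assms] by auto

lemma is_arg_max_quadratic:
  fixes c :: real
  assumes "0 < c"
  shows "is_arg_max (\<lambda>a. c * a - a\<^sup>2) (\<lambda>a. a \<in> {0<..c}) (c / 2)"
proof -
  have "c * a - a\<^sup>2 \<le> c * (c / 2) - (c / 2)\<^sup>2" for a
    using zero_le_power2[of "a - c / 2"] by (simp add: power2_eq_square algebra_simps)
  then show ?thesis
    using assms by (simp add: is_arg_max_linorder)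
qed

lemma powr_mult_self:
  fixes s p :: real
  assumes "0 \<le> s"
  shows "s powr p * s = s powr (p + 1)"
  using assms by (simp add: powr_add)

lemma norm_holder_direction:
  assumes "0 < \<nu>"
  shows "norm (holder_direction \<nu> v) = norm v powr (1 / \<nu>)"
proof -
  have "(1 - \<nu>) / \<nu> + 1 = 1 / \<nu>"
    using assms by (simp add: field_simps)
  then show ?thesis
    by (simp add: holder_direction_def powr_mult_self)
qed

lemma inner_holder_direction:
  fixes v :: "'a::real_inner"
  assumes "0 < \<nu>"
  shows "inner v (holder_direction \<nu> v) = norm v powr ((1 + \<nu>) / \<nu>)"
proof -
  have "(1 - \<nu>) / \<nu> + 1 + 1 = (1 + \<nu>) / \<nu>"
    using assms by (simp add: field_simps)
  moreover have "inner v (holder_direction \<nu> v) = norm v powr ((1 - \<nu>) / \<nu>) * norm v * norm v"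
    by (simp add: holder_direction_def dot_square_norm power2_eq_square)
  ultimately show ?thesis
    by (simp add: powr_mult_self)
qed

lemma holder_model_holder_direction:
  fixes v :: "'a::real_inner"
  assumes "0 < \<nu>" "0 \<le> a"
  shows "inner v (a *\<^sub>R holder_direction \<nu> v) - L / (1 + \<nu>) * norm (a *\<^sub>R holder_direction \<nu> v) powr (1 + \<nu>)
       = (a - L / (1 + \<nu>) * a powr (1 + \<nu>)) * norm v powr ((1 + \<nu>) / \<nu>)"
proof -
  have "1 / \<nu> * (1 + \<nu>) = (1 + \<nu>) / \<nu>"
    by simp
  then have "norm (a *\<^sub>R holder_direction \<nu> v) powr (1 + \<nu>) = a powr (1 + \<nu>) * norm v powr ((1 + \<nu>) / \<nu>)"
    using assms by (simp add: norm_holder_direction powr_mult powr_powr del: times_divide_eq_left)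
  then show ?thesis
    using assms by (simp add: inner_holder_direction algebra_simps)
qed

lemma gderiv_along_line:
  assumes "GDERIV f (y + t *\<^sub>R d) :> G"
  shows "((\<lambda>s. f (y + s *\<^sub>R d)) has_real_derivative inner d G) (at t)"
proof -
  have "((\<lambda>s. f (y + s *\<^sub>R d)) has_derivative (\<lambda>s. inner (s *\<^sub>R d) G)) (at t)"
    using assms unfolding gderiv_def
    by (intro has_derivative_compose[of "\<lambda>s. y + s *\<^sub>R d" _ _ _ f]) (auto intro!: derivative_eq_intros)
  moreover have "(\<lambda>s. inner (s *\<^sub>R d) G) = (*) (inner d G)"
    by auto
  ultimately show ?thesis
    by (simp add: has_field_derivative_def)
qed

lemma convex_on_imp_above_tangent_gderiv:
  assumes "convex_on UNIV f" "GDERIV f x :> G"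
  shows "f x + inner G (y - x) \<le> f y"
proof -
  define h where "h t = f (x + t *\<^sub>R (y - x))" for t
  have "convex_on UNIV h"
  proof (rule convex_onI)
    fix t a b :: real
    have "x + ((1 - t) *\<^sub>R a + t *\<^sub>R b) *\<^sub>R (y - x)
        = (1 - t) *\<^sub>R (x + a *\<^sub>R (y - x)) + t *\<^sub>R (x + b *\<^sub>R (y - x))"
      by (simp add: algebra_simps)
    moreover assume "0 < t" "t < 1"
    ultimately show "h ((1 - t) *\<^sub>R a + t *\<^sub>R b) \<le> (1 - t) * h a + t * h b"
      unfolding h_def using convex_onD[OF assms(1), of t] by simp
  qed simp
  moreover have "(h has_real_derivative inner (y - x) G) (at 0)"
    unfolding h_def using assms(2) by (intro gderiv_along_line) simp
  ultimately have "h 1 - h 0 \<ge> inner (y - x) G * (1 - 0)"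
    by (intro convex_on_imp_above_tangent[where A = UNIV]) auto
  then show ?thesis
    by (simp add: h_def inner_commute)
qed

lemma gderiv_eq_0_at_argmin:
  assumes "GDERIV f x :> G" "x \<in> argmin_set f"
  shows "G = 0"
proof -
  have "(\<lambda>h. inner h G) = (\<lambda>h. 0)"
    using assms unfolding gderiv_def argmin_set_def
    by (intro has_derivative_local_min) (auto intro: always_eventually)
  then show ?thesis
    by (metis inner_eq_zero_iff)
qed

lemma holder_descent:
  fixes f :: "'a::real_inner \<Rightarrow> real"
  assumes grad: "\<And>y. GDERIV f y :> g y" and holder: "holder_on \<nu> L S g"
    and S: "convex S" "y \<in> S" "z \<in> S" and "0 < \<nu>" "0 \<le> L"
  shows "f z \<le> f y + inner (g y) (z - y) + L / (1 + \<nu>) * norm (z - y) powr (1 + \<nu>)"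
proof -
  define d where "d = z - y"
  \<comment> \<open>The Hoelder remainder is built into \<open>k\<close> so that \<open>k' \<le> 0\<close> on \<open>(0, 1)\<close>;
      this yields the constant \<open>L / (1 + \<nu>)\<close> rather than the \<open>L\<close> of a plain mean value argument.\<close>
  define k where "k t = f (y + t *\<^sub>R d) - t * inner (g y) d
                        - L / (1 + \<nu>) * t powr (1 + \<nu>) * norm d powr (1 + \<nu>)" for t
  have "k 1 \<le> k 0"
  proof (rule DERIV_nonpos_imp_decreasing_open[of 0 1, OF zero_le_one])
    fix t :: real
    assume t: "0 < t" "t < 1"
    have "y + t *\<^sub>R d = (1 - t) *\<^sub>R y + t *\<^sub>R z"
      by (simp add: d_def algebra_simps)
    then have "y + t *\<^sub>R d \<in> S"
      using S t convexD[of S y z "1 - t" t] by simp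
    then have "norm (g (y + t *\<^sub>R d) - g y) \<le> L * norm (t *\<^sub>R d) powr \<nu>"
      using holder S unfolding holder_on_def by (metis add_diff_cancel_left')
    then have "inner d (g (y + t *\<^sub>R d) - g y) \<le> norm d * (L * norm (t *\<^sub>R d) powr \<nu>)"
      by (intro order_trans[OF norm_cauchy_schwarz] mult_left_mono) auto
    also have "\<dots> = L * t powr \<nu> * norm d powr (1 + \<nu>)"
      using t by (simp add: powr_add powr_mult)
    finally have "inner d (g (y + t *\<^sub>R d)) - inner (g y) d - L * t powr \<nu> * norm d powr (1 + \<nu>) \<le> 0"
      by (simp add: inner_diff_right inner_commute)
    moreover have "(k has_real_derivative
        inner d (g (y + t *\<^sub>R d)) - inner (g y) d - L * t powr \<nu> * norm d powr (1 + \<nu>)) (at t)"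
      unfolding k_def using t \<open>0 < \<nu>\<close>
      by (auto intro!: derivative_eq_intros gderiv_along_line grad)
    ultimately show "\<exists>D. (k has_real_derivative D) (at t) \<and> D \<le> 0"
      by blast
  next
    have "continuous_on {0..1} (\<lambda>t. f (y + t *\<^sub>R d))"
      using gderiv_along_line[OF grad] by (meson DERIV_continuous continuous_at_imp_continuous_on)
    moreover have "continuous_on {0..1} (\<lambda>t::real. t powr (1 + \<nu>))"
      using \<open>0 < \<nu>\<close> by (intro continuous_on_powr') (auto intro!: continuous_intros)
    ultimately show "continuous_on {0..1} k"
      unfolding k_def by (intro continuous_on_diff continuous_on_mult continuous_on_const continuous_on_id)
  qed
  then show ?thesis
    using \<open>0 < \<nu>\<close> by (simp add: k_def d_def)
qed

lemma holder_direction_descent: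
  fixes f :: "'a::real_inner \<Rightarrow> real"
  assumes "\<And>y. GDERIV f y :> g y" "holder_on \<nu> L S g" "convex S"
    and "y \<in> S" "y - a *\<^sub>R holder_direction \<nu> (g y) \<in> S" "0 < \<nu>" "0 \<le> L" "0 \<le> a"
  shows "f (y - a *\<^sub>R holder_direction \<nu> (g y))
       \<le> f y - (a - L / (1 + \<nu>) * a powr (1 + \<nu>)) * norm (g y) powr ((1 + \<nu>) / \<nu>)"
  using holder_descent[OF assms(1-5)] assms(6-8) holder_model_holder_direction[of \<nu> a "g y" L]
  by (simp add: inner_minus_right)

lemma holder_inner_gradient_argmin_ge:
  fixes f :: "'a::real_inner \<Rightarrow> real"
  assumes convex: "convex_on UNIV f" and grad: "\<And>y. GDERIV f y :> g y"
    and holder: "holder_on \<nu> L S g" "convex S" and argmin: "xs \<in> argmin_set f"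
    and S: "y \<in> S" "xs \<in> S" "y - u \<in> S" "xs + u \<in> S" and "0 < \<nu>" "0 \<le> L"
  shows "2 * (inner (g y) u - L / (1 + \<nu>) * norm u powr (1 + \<nu>)) \<le> inner (g y) (y - xs)"
proof -
  have "g xs = 0"
    using gderiv_eq_0_at_argmin[OF grad argmin] .
  have "f (y - u) \<le> f y - inner (g y) u + L / (1 + \<nu>) * norm u powr (1 + \<nu>)"
    using holder_descent[OF grad holder S(1,3)] \<open>0 < \<nu>\<close> \<open>0 \<le> L\<close> by (simp add: inner_minus_right)
  moreover have "f (xs + u) \<le> f xs + L / (1 + \<nu>) * norm u powr (1 + \<nu>)"
    using holder_descent[OF grad holder S(2,4)] \<open>0 < \<nu>\<close> \<open>0 \<le> L\<close> \<open>g xs = 0\<close> by simp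
  moreover have "f y + inner (g y) (xs + u - y) \<le> f (xs + u)"
    using convex_on_imp_above_tangent_gderiv[OF convex grad] .
  moreover have "f xs \<le> f (y - u)"
    using argmin by (simp add: argmin_set_def)
  ultimately show ?thesis
    by (simp add: inner_diff_right inner_add_right)
qed

lemma norm_holder_step_le:
  assumes holder: "holder_on \<nu> L S g" and S: "y \<in> S" "xs \<in> S" and "g xs = 0"
    and "0 < \<nu>" "0 < L" "0 \<le> a" "a \<le> ((1 + \<nu>) / L) powr (1 / \<nu>)"
  shows "norm (a *\<^sub>R holder_direction \<nu> (g y)) \<le> (1 + \<nu>) powr (1 / \<nu>) * norm (y - xs)"
proof -
  have "norm (g y) \<le> L * norm (y - xs) powr \<nu>"
    using holder S \<open>g xs = 0\<close> unfolding holder_on_def by (metis diff_zero)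
  then have "norm (g y) powr (1 / \<nu>) \<le> (L * norm (y - xs) powr \<nu>) powr (1 / \<nu>)"
    using \<open>0 < \<nu>\<close> by (intro powr_mono2) auto
  also have "\<dots> = L powr (1 / \<nu>) * norm (y - xs)"
    using \<open>0 < \<nu>\<close> \<open>0 < L\<close> by (simp add: powr_mult powr_powr)
  finally have "a * norm (g y) powr (1 / \<nu>) \<le> ((1 + \<nu>) / L) powr (1 / \<nu>) * (L powr (1 / \<nu>) * norm (y - xs))"
    using assms by (intro mult_mono) auto
  then show ?thesis
    using assms by (simp add: norm_holder_direction powr_divide)
qed

lemma norm_diff_holder_step_le:
  fixes v :: "'a::real_inner"
  assumes "0 < \<nu>" "0 \<le> a" and inner_ge: "c * norm v powr ((1 + \<nu>) / \<nu>) \<le> inner v (y - xs)"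
  shows "(norm (y - a *\<^sub>R holder_direction \<nu> v - xs))\<^sup>2
       \<le> (norm (y - xs))\<^sup>2 - (2 * c * a - a\<^sup>2) * norm v powr (2 / \<nu>)"
proof -
  define d where "d = holder_direction \<nu> v"
  define q where "q = norm v powr (2 / \<nu>)"
  have "norm v powr ((1 - \<nu>) / \<nu>) * norm v powr ((1 + \<nu>) / \<nu>) = q"
  proof -
    have "(1 - \<nu>) / \<nu> + (1 + \<nu>) / \<nu> = 2 / \<nu>"
      using assms by (simp add: field_simps)
    then show ?thesis
      by (simp add: q_def powr_add[symmetric])
  qed
  then have "c * q \<le> inner d (y - xs)"
    using mult_left_mono[OF inner_ge, of "norm v powr ((1 - \<nu>) / \<nu>)"]
    by (simp add: d_def holder_direction_def mult.left_commute)
  then have "2 * a * (c * q) \<le> 2 * a * inner d (y - xs)"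
    using \<open>0 \<le> a\<close> by (intro mult_left_mono) auto
  moreover have "(norm (y - a *\<^sub>R d - xs))\<^sup>2 = (norm (y - xs))\<^sup>2 - 2 * a * inner d (y - xs) + a\<^sup>2 * (norm d)\<^sup>2"
    unfolding power2_norm_eq_inner
    by (simp add: inner_diff_left inner_diff_right inner_commute algebra_simps power2_eq_square)
  moreover have "(norm d)\<^sup>2 = q"
    using assms by (simp add: d_def q_def norm_holder_direction powr_powr flip: powr_realpow')
  moreover have "(2 * c * a - a\<^sup>2) * q = 2 * a * (c * q) - a\<^sup>2 * q"
    by (simp add: algebra_simps)
  ultimately have "(norm (y - a *\<^sub>R d - xs))\<^sup>2 \<le> (norm (y - xs))\<^sup>2 - (2 * c * a - a\<^sup>2) * q"
    by simp
  then show ?thesis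
    by (simp add: d_def q_def)
qed

lemma holder_step_in_cball:
  fixes y xs :: "'a::real_normed_vector" and \<nu> r :: real
  defines "R \<equiv> (1 + 2 * (1 + \<nu>) powr (1 / \<nu>)) * r"
  assumes holder: "holder_on \<nu> L (cball 0 R) g" and y: "norm y \<le> r" and xs: "norm xs \<le> r" "g xs = 0"
    and step: "0 < \<nu>" "0 < L" "0 \<le> a" "a \<le> ((1 + \<nu>) / L) powr (1 / \<nu>)"
  shows "y \<in> cball 0 R" "xs \<in> cball 0 R"
    and "y - a *\<^sub>R holder_direction \<nu> (g y) \<in> cball 0 R"
    and "xs + a *\<^sub>R holder_direction \<nu> (g y) \<in> cball 0 R"
proof -
  have "0 \<le> r"
    using y norm_ge_zero order_trans by blast
  then have "r \<le> R"
    unfolding R_def using mult_nonneg_nonneg[OF powr_ge_zero \<open>0 \<le> r\<close>] by (simp add: algebra_simps)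
  then show y_in: "y \<in> cball 0 R" and xs_in: "xs \<in> cball 0 R"
    using y xs by auto
  have "norm (y - xs) \<le> 2 * r"
    using norm_triangle_ineq4[of y xs] y xs by linarith
  have "norm (a *\<^sub>R holder_direction \<nu> (g y)) \<le> (1 + \<nu>) powr (1 / \<nu>) * norm (y - xs)"
    by (rule norm_holder_step_le[OF holder y_in xs_in xs(2) step])
  also have "\<dots> \<le> (1 + \<nu>) powr (1 / \<nu>) * (2 * r)"
    using \<open>norm (y - xs) \<le> 2 * r\<close> by (intro mult_left_mono) simp_all
  moreover have "R = r + (1 + \<nu>) powr (1 / \<nu>) * (2 * r)"
    by (simp add: R_def algebra_simps)
  ultimately show "y - a *\<^sub>R holder_direction \<nu> (g y) \<in> cball 0 R"
    and "xs + a *\<^sub>R holder_direction \<nu> (g y) \<in> cball 0 R"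
    using y xs norm_triangle_ineq4[of y "a *\<^sub>R holder_direction \<nu> (g y)"]
      norm_triangle_ineq[of xs "a *\<^sub>R holder_direction \<nu> (g y)"]
    unfolding mem_cball_0 by linarith+
qed

lemma inner_gradient_argmin_ge_cball:
  fixes f :: "'a::real_inner \<Rightarrow> real" and \<nu> r :: real
  defines "R \<equiv> (1 + 2 * (1 + \<nu>) powr (1 / \<nu>)) * r"
  assumes convex: "convex_on UNIV f" and grad: "\<And>y. GDERIV f y :> g y"
    and holder: "holder_on \<nu> L (cball 0 R) g" and "norm y \<le> r"
    and argmin: "xs \<in> argmin_set f" "norm xs \<le> r" and "0 < \<nu>" "0 < L"
  shows "2 * \<nu> / ((1 + \<nu>) * L powr (1 / \<nu>)) * norm (g y) powr ((1 + \<nu>) / \<nu>) \<le> inner (g y) (y - xs)"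
proof -
  define a where "a = 1 / L powr (1 / \<nu>)"
  have "0 \<le> a" "a \<le> ((1 + \<nu>) / L) powr (1 / \<nu>)"
    using holder_optimal_step_le[OF \<open>0 < \<nu>\<close> \<open>0 < L\<close>] by (simp_all add: a_def)
  note in_cball = holder_step_in_cball[OF holder[unfolded R_def] \<open>norm y \<le> r\<close> \<open>norm xs \<le> r\<close>
      gderiv_eq_0_at_argmin[OF grad argmin(1)] \<open>0 < \<nu>\<close> \<open>0 < L\<close> this]
  have "2 * \<nu> / ((1 + \<nu>) * L powr (1 / \<nu>)) * norm (g y) powr ((1 + \<nu>) / \<nu>)
      = 2 * ((a - L / (1 + \<nu>) * a powr (1 + \<nu>)) * norm (g y) powr ((1 + \<nu>) / \<nu>))"
    unfolding a_def holder_gain_at_optimum[OF \<open>0 < \<nu>\<close> \<open>0 < L\<close>] by simp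
  also have "\<dots> = 2 * (inner (g y) (a *\<^sub>R holder_direction \<nu> (g y))
          - L / (1 + \<nu>) * norm (a *\<^sub>R holder_direction \<nu> (g y)) powr (1 + \<nu>))"
    by (simp only: holder_model_holder_direction[OF \<open>0 < \<nu>\<close> \<open>0 \<le> a\<close>])
  also have "\<dots> \<le> inner (g y) (y - xs)"
    using holder_inner_gradient_argmin_ge[OF convex grad holder[unfolded R_def] convex_cball argmin(1)
        in_cball] \<open>0 < \<nu>\<close> \<open>0 < L\<close> by simp
  finally show ?thesis .
qed

lemma holder_step_descent_cball:
  fixes f :: "'a::real_inner \<Rightarrow> real" and \<nu> r :: real
  defines "R \<equiv> (1 + 2 * (1 + \<nu>) powr (1 / \<nu>)) * r"
  assumes grad: "\<And>y. GDERIV f y :> g y" and holder: "holder_on \<nu> L (cball 0 R) g"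
    and points: "norm y \<le> r" "norm xs \<le> r" "g xs = 0"
    and step: "0 < \<nu>" "0 < L" "0 \<le> a" "a \<le> ((1 + \<nu>) / L) powr (1 / \<nu>)"
  shows "f (y - a *\<^sub>R holder_direction \<nu> (g y))
       \<le> f y - (a - L / (1 + \<nu>) * a powr (1 + \<nu>)) * norm (g y) powr ((1 + \<nu>) / \<nu>)"
    and "f (y - a *\<^sub>R holder_direction \<nu> (g y)) \<le> f y"
proof -
  note in_cball = holder_step_in_cball[OF holder[unfolded R_def] points step]
  show descent: "f (y - a *\<^sub>R holder_direction \<nu> (g y))
      \<le> f y - (a - L / (1 + \<nu>) * a powr (1 + \<nu>)) * norm (g y) powr ((1 + \<nu>) / \<nu>)"
    using holder_direction_descent[OF grad holder[unfolded R_def] convex_cball in_cball(1,3)] step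
    by simp
  have "0 \<le> (a - L / (1 + \<nu>) * a powr (1 + \<nu>)) * norm (g y) powr ((1 + \<nu>) / \<nu>)"
    using holder_gain_nonneg[OF step] by simp
  then show "f (y - a *\<^sub>R holder_direction \<nu> (g y)) \<le> f y"
    using descent by linarith
qed

lemma holder_step_distance_cball:
  fixes f :: "'a::real_inner \<Rightarrow> real" and \<nu> r L :: real
  defines "R \<equiv> (1 + 2 * (1 + \<nu>) powr (1 / \<nu>)) * r"
    and "K \<equiv> (1 + \<nu>) * L powr (1 / \<nu>)"
  assumes convex: "convex_on UNIV f" and grad: "\<And>y. GDERIV f y :> g y"
    and holder: "holder_on \<nu> L (cball 0 R) g"
    and points: "norm y \<le> r" "xs \<in> argmin_set f" "norm xs \<le> r" and "0 < \<nu>" "0 < L" "0 \<le> a"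
  shows "(norm (y - a *\<^sub>R holder_direction \<nu> (g y) - xs))\<^sup>2
       \<le> (norm (y - xs))\<^sup>2 - (4 * \<nu> * a / K - a\<^sup>2) * norm (g y) powr (2 / \<nu>)"
    and "a \<le> 4 * \<nu> / K \<Longrightarrow> norm (y - a *\<^sub>R holder_direction \<nu> (g y) - xs) \<le> norm (y - xs)"
proof -
  show distance: "(norm (y - a *\<^sub>R holder_direction \<nu> (g y) - xs))\<^sup>2
      \<le> (norm (y - xs))\<^sup>2 - (4 * \<nu> * a / K - a\<^sup>2) * norm (g y) powr (2 / \<nu>)"
    using norm_diff_holder_step_le[OF \<open>0 < \<nu>\<close> \<open>0 \<le> a\<close>
        inner_gradient_argmin_ge_cball[OF convex grad holder[unfolded R_def] points \<open>0 < \<nu>\<close> \<open>0 < L\<close>]]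
    by (simp add: K_def)
  assume "a \<le> 4 * \<nu> / K"
  then have "0 \<le> a * (4 * \<nu> / K - a)"
    using \<open>0 \<le> a\<close> by simp
  also have "\<dots> = 4 * \<nu> * a / K - a\<^sup>2"
    by (simp add: power2_eq_square right_diff_distrib)
  finally have "0 \<le> (4 * \<nu> * a / K - a\<^sup>2) * norm (g y) powr (2 / \<nu>)"
    by simp
  then have "(norm (y - a *\<^sub>R holder_direction \<nu> (g y) - xs))\<^sup>2 \<le> (norm (y - xs))\<^sup>2"
    using distance by linarith
  then show "norm (y - a *\<^sub>R holder_direction \<nu> (g y) - xs) \<le> norm (y - xs)"
    by (rule power2_le_imp_le) simp
qed

theorem theorem3p13:
  fixes f :: "real ^ 'n \<Rightarrow> real"
    and g :: "real ^ 'n \<Rightarrow> real ^ 'n"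
    and \<nu> L r :: real
    and x0 :: "real ^ 'n"
    and x :: "nat \<Rightarrow> real ^ 'n"
    and \<alpha> :: "nat \<Rightarrow> real"
  assumes convex: "convex_on UNIV f"
    and grad: "\<And>y. GDERIV f y :> g y"
    and grad_cont: "continuous_on UNIV g"
    and nu: "0 < \<nu>" "\<nu> \<le> 1"
    and holder: "locally_holder \<nu> g"
    and argmin_ne: "argmin_set f \<noteq> {}"
    and bounded_level: "bounded (level_set f x0)"
    and r_def: "r = (SUP y\<in>level_set f x0. norm y)"
    and L_pos: "L > 0"
    and L_holder: "\<And>y z. y \<in> cball 0 ((1 + 2 * (1 + \<nu>) powr (1 / \<nu>)) * r) \<Longrightarrow>
                          z \<in> cball 0 ((1 + 2 * (1 + \<nu>) powr (1 / \<nu>)) * r) \<Longrightarrow>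
                          norm (g y - g z) \<le> L * norm (y - z) powr \<nu>"
    and x_0: "x 0 = x0"
    and x_step: "\<And>k. x (Suc k) = x k - (\<alpha> k * norm (g (x k)) powr ((1 - \<nu>) / \<nu>)) *\<^sub>R g (x k)"
    and alpha: "\<And>k. 0 < \<alpha> k \<and> \<alpha> k \<le> ((1 + \<nu>) / L) powr (1 / \<nu>)"
  shows "(\<forall>k. x k \<in> level_set f x0)
       \<and> (\<forall>k. f (x (Suc k)) \<le> f (x k)
                 - (\<alpha> k - L / (1 + \<nu>) * \<alpha> k powr (1 + \<nu>)) * norm (g (x k)) powr ((1 + \<nu>) / \<nu>))
       \<and> (\<forall>k. f (x (Suc k)) \<le> f (x k))
       \<and> ((\<forall>k. \<alpha> k \<le> 4 * \<nu> / ((1 + \<nu>) * L powr (1 / \<nu>))) \<longrightarrow>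
            (\<forall>xs\<in>argmin_set f.
               (\<forall>k. (norm (x (Suc k) - xs))\<^sup>2 \<le> (norm (x k - xs))\<^sup>2
                     - (4 * \<nu> * \<alpha> k / ((1 + \<nu>) * L powr (1 / \<nu>)) - (\<alpha> k)\<^sup>2)
                       * norm (g (x k)) powr (2 / \<nu>))
             \<and> (\<forall>k. norm (x (Suc k) - xs) \<le> norm (x k - xs))))
       \<and> is_arg_max (\<lambda>a. a - L / (1 + \<nu>) * a powr (1 + \<nu>))
            (\<lambda>a. a \<in> {0<..((1 + \<nu>) / L) powr (1 / \<nu>)}) (1 / L powr (1 / \<nu>))
       \<and> is_arg_max (\<lambda>a. 4 * \<nu> * a / ((1 + \<nu>) * L powr (1 / \<nu>)) - a\<^sup>2)
            (\<lambda>a. a \<in> {0<..4 * \<nu> / ((1 + \<nu>) * L powr (1 / \<nu>))})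
            (2 * \<nu> / ((1 + \<nu>) * L powr (1 / \<nu>)))"
proof -
  define R where "R = (1 + 2 * (1 + \<nu>) powr (1 / \<nu>)) * r"
  have holder_R: "holder_on \<nu> L (cball 0 R) g"
    using L_holder by (simp add: holder_on_def R_def)
  have level_le: "norm y \<le> r" if "y \<in> level_set f x0" for y
    unfolding r_def using that bounded_level by (intro cSUP_upper) (simp_all add: bdd_above_norm)
  have argmin: "norm xs \<le> r" "g xs = 0" if "xs \<in> argmin_set f" for xs
    using that level_le[of xs] gderiv_eq_0_at_argmin[OF grad that] by (simp_all add: argmin_set_def level_set_def)
  obtain xs0 where "xs0 \<in> argmin_set f"
    using argmin_ne by blast
  have step: "x (Suc k) = x k - \<alpha> k *\<^sub>R holder_direction \<nu> (g (x k))" for k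
    using x_step by (simp add: holder_direction_def)
  have alpha_bounds: "0 \<le> \<alpha> k" "\<alpha> k \<le> ((1 + \<nu>) / L) powr (1 / \<nu>)" for k
    using alpha[of k] by simp_all
  note descent = holder_step_descent_cball[OF grad holder_R[unfolded R_def] level_le
      argmin[OF \<open>xs0 \<in> argmin_set f\<close>] nu(1) L_pos alpha_bounds]
  have level: "x k \<in> level_set f x0" for k
  proof (induction k)
    case 0
    show ?case
      using x_0 by (simp add: level_set_def)
  next
    case (Suc k)
    then show ?case
      using descent(2)[OF Suc, of k] by (simp add: level_set_def step)
  qed
  note distance = holder_step_distance_cball[OF convex grad holder_R[unfolded R_def] level_le[OF level]
      _ argmin(1) nu(1) L_pos alpha_bounds(1)]
  have "is_arg_max (\<lambda>a. 4 * \<nu> * a / ((1 + \<nu>) * L powr (1 / \<nu>)) - a\<^sup>2)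
      (\<lambda>a. a \<in> {0<..4 * \<nu> / ((1 + \<nu>) * L powr (1 / \<nu>))}) (2 * \<nu> / ((1 + \<nu>) * L powr (1 / \<nu>)))"
    using is_arg_max_quadratic[of "4 * \<nu> / ((1 + \<nu>) * L powr (1 / \<nu>))"] nu L_pos by simp
  then show ?thesis
    unfolding step using level descent distance is_arg_max_holder_gain[OF nu(1) L_pos] by blast
qed

end
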